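(* Let $G$ be a finite simple graph with $|G|$ vertices and let $s$ be a positive integer. Then \[ \sum_{i=1}^{|G|} \lambda_i(G)^{2s} \le \sum_{v \in V(G)} \lambda_1\bigl(B_G(v,s)\bigr)^{2s}. \]
   Context: For a graph $F$, $\lambda_1(F) \ge \lambda_2(F) \ge \cdots$ denote the eigenvalues of the adjacency matrix of $F$, listed with multiplicity. For a vertex $v$ of $G$ and integer $s \ge 0$, $B_G(v,s)$ denotes the subgraph of $G$ induced by all vertices within graph distance at most $s$ of $v$. *)

theory Defs
  imports "Jordan_Normal_Form.Char_Poly"
begin

text \<open>A finite simple graph is given by a finite vertex set V and a symmetric,
irreflexive adjacency relation E; only edges between vertices of V are used.\<close>

definition vertex_list :: "'a set \<Rightarrow> 'a list" where
  "vertex_list V = (SOME xs. distinct xs \<and> set xs = V)"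

text \<open>Adjacency matrix of the subgraph induced by the vertex set V
(vertices enumerated in some fixed order; the spectrum does not depend on it).\<close>
definition adj_mat :: "('a \<Rightarrow> 'a \<Rightarrow> bool) \<Rightarrow> 'a set \<Rightarrow> real mat" where
  "adj_mat E V = (let vs = vertex_list V in
     mat (length vs) (length vs) (\<lambda>(i, j). if E (vs ! i) (vs ! j) then 1 else 0))"

definition eig_power_sum :: "real mat \<Rightarrow> nat \<Rightarrow> real" where
  "eig_power_sum A k =
     (\<Sum>a\<in>{a. eigenvalue A a}. of_nat (order a (char_poly A)) * a ^ k)"

definition lambda1 :: "real mat \<Rightarrow> real" where
  "lambda1 A = Max {a. eigenvalue A a}"

fun ball_verts :: "('a \<Rightarrow> 'a \<Rightarrow> bool) \<Rightarrow> 'a set \<Rightarrow> 'a \<Rightarrow> nat \<Rightarrow> 'a set" where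
  "ball_verts E V v 0 = {v}"
| "ball_verts E V v (Suc k) =
     ball_verts E V v k \<union> {u \<in> V. \<exists>w \<in> ball_verts E V v k. E w u}"

end

theory Submission
  imports Defs "Jordan_Normal_Form.Schur_Decomposition"
begin

text \<open>
  Let A be the adjacency matrix of G. Both sides of the inequality are sums of closed walks:
  tr A^(2s) is the sum of the (2s)-th powers of the eigenvalues, and it is also the sum over
  the vertices v of the number of closed walks of length 2s at v. Such a walk never leaves
  B(v, s), so it is counted by the diagonal entry at v of the (2s)-th power of the adjacency
  matrix of B(v, s).

  It remains to show that M^(2s)_ii \<le> \<lambda>1(M)^(2s) for every real symmetric matrix M with
  nonnegative entries. Its eigenvalues \<lambda>j are real, and the traces of its odd powers are
  nonnegative, so
    \<lambda>1 tr M^(2m) \<le> \<lambda>1 tr M^(2m) + tr M^(2m+1) = \<Sum>j \<lambda>j^(2m) (\<lambda>1 + \<lambda>j) \<le> 2 n \<lambda>1^(2m+1).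
  Hence (M^(2s)_ii)^k \<le> M^(2sk)_ii \<le> tr M^(2sk) \<le> 2 n \<lambda>1^(2sk) for all k, and letting k grow
  gives the claim.
\<close>

section \<open>Traces and triangular matrices\<close>

definition mat_trace :: "'a::comm_monoid_add mat \<Rightarrow> 'a" where
  "mat_trace A = (\<Sum>i<dim_row A. A $$ (i, i))"

lemma index_mult_mat_sum:
  assumes "A \<in> carrier_mat n m" "B \<in> carrier_mat m p" "i < n" "j < p"
  shows "(A * B) $$ (i, j) = (\<Sum>k<m. A $$ (i, k) * B $$ (k, j))"
  using assms by (simp add: scalar_prod_def atLeast0LessThan)

lemma mat_trace_mult_comm:
  fixes A B :: "'a::comm_semiring_0 mat"
  assumes "A \<in> carrier_mat n m" "B \<in> carrier_mat m n"
  shows "mat_trace (A * B) = mat_trace (B * A)"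
proof -
  have "mat_trace (A * B) = (\<Sum>i<n. \<Sum>k<m. A $$ (i, k) * B $$ (k, i))"
    unfolding mat_trace_def using assms by (simp add: index_mult_mat_sum del: index_mult_mat(1))
  also have "\<dots> = (\<Sum>k<m. \<Sum>i<n. B $$ (k, i) * A $$ (i, k))"
    by (subst sum.swap) (simp add: mult.commute)
  also have "\<dots> = mat_trace (B * A)"
    unfolding mat_trace_def using assms by (simp add: index_mult_mat_sum del: index_mult_mat(1))
  finally show ?thesis .
qed

lemma mat_trace_similar_mat_wit:
  fixes A B :: "'a::comm_ring_1 mat"
  assumes A: "A \<in> carrier_mat n n" and wit: "similar_mat_wit A B P Q"
  shows "mat_trace A = mat_trace B"
proof -
  obtain B': "B \<in> carrier_mat n n" and P: "P \<in> carrier_mat n n" and Q: "Q \<in> carrier_mat n n"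
    and QP: "Q * P = 1\<^sub>m n" and APBQ: "A = P * B * Q"
    using similar_mat_witD2[OF A wit] by blast
  have "mat_trace A = mat_trace (P * (B * Q))" using APBQ assoc_mult_mat[OF P B' Q] by simp
  also have "\<dots> = mat_trace (B * Q * P)" using P B' Q by (intro mat_trace_mult_comm) auto
  also have "B * Q * P = B" using assoc_mult_mat[OF B' Q P] QP B' by simp
  finally show ?thesis .
qed

lemma upper_triangular_mult:
  fixes X Y :: "'a::semiring_0 mat"
  assumes X: "X \<in> carrier_mat n n" and Y: "Y \<in> carrier_mat n n"
    and "upper_triangular X" "upper_triangular Y"
  shows "upper_triangular (X * Y)" "i < n \<Longrightarrow> (X * Y) $$ (i, i) = X $$ (i, i) * Y $$ (i, i)"
proof -
  have vanish: "X $$ (i, k) * Y $$ (k, j) = 0" if "i < n" "k < n" "k < i \<or> j < k" for i j k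
    using that assms upper_triangularD[of X k i] upper_triangularD[of Y j k] by auto
  show "upper_triangular (X * Y)"
  proof
    fix i j assume "i < dim_row (X * Y)" "j < i"
    then have i: "i < n" and "j < n" using X by auto
    then have "(X * Y) $$ (i, j) = (\<Sum>k<n. X $$ (i, k) * Y $$ (k, j))"
      by (rule index_mult_mat_sum[OF X Y])
    also have "\<dots> = 0"
      using \<open>j < i\<close> by (intro sum.neutral ballI vanish[OF i]) auto
    finally show "(X * Y) $$ (i, j) = 0" .
  qed
  assume i: "i < n"
  have "(X * Y) $$ (i, i) = (\<Sum>k<n. X $$ (i, k) * Y $$ (k, i))"
    by (rule index_mult_mat_sum[OF X Y i i])
  also have "\<dots> = (\<Sum>k\<in>{i}. X $$ (i, k) * Y $$ (k, i))"
    using i by (intro sum.mono_neutral_right ballI vanish[OF i]) auto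
  finally show "(X * Y) $$ (i, i) = X $$ (i, i) * Y $$ (i, i)" by simp
qed

lemma pow_mat_add:
  assumes A: "A \<in> carrier_mat n n"
  shows "A ^\<^sub>m (a + b) = A ^\<^sub>m a * A ^\<^sub>m b"
proof (induction b)
  case (Suc b)
  have "A ^\<^sub>m (a + Suc b) = (A ^\<^sub>m a * A ^\<^sub>m b) * A" using Suc by simp
  also have "\<dots> = A ^\<^sub>m a * (A ^\<^sub>m b * A)"
    using A by (intro assoc_mult_mat[of _ n n _ n _ n]) auto
  finally show ?case by simp
qed (use A in simp)

lemma upper_triangular_pow_mat:
  fixes T :: "'a::semiring_1 mat"
  assumes T: "T \<in> carrier_mat n n" and ut: "upper_triangular T"
  shows "upper_triangular (T ^\<^sub>m k) \<and> (\<forall>i<n. (T ^\<^sub>m k) $$ (i, i) = T $$ (i, i) ^ k)"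
proof (induction k)
  case 0
  show ?case using T by (auto simp: upper_triangular_def)
next
  case (Suc k)
  then show ?case
    using upper_triangular_mult[OF pow_carrier_mat[OF T] T _ ut] by (simp add: power_commutes)
qed

lemma mat_trace_pow_mat_eq_sum_roots:
  fixes A :: "'a::conjugatable_ordered_field mat"
  assumes A: "A \<in> carrier_mat n n" and cp: "char_poly A = (\<Prod>r\<leftarrow>rs. [:-r, 1:])"
  shows "mat_trace (A ^\<^sub>m k) = (\<Sum>r\<leftarrow>rs. r ^ k)"
proof -
  obtain T P Q where "schur_decomposition A rs = (T, P, Q)"
    by (cases "schur_decomposition A rs")
  from schur_decomposition[OF A cp this] have wit: "similar_mat_wit A T P Q"
    and ut: "upper_triangular T" and diag: "diag_mat T = rs" by auto
  have T: "T \<in> carrier_mat n n" using similar_mat_witD2[OF A wit] by blast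
  have "mat_trace (A ^\<^sub>m k) = mat_trace (T ^\<^sub>m k)"
    using A similar_mat_wit_pow[OF wit] by (intro mat_trace_similar_mat_wit) auto
  also have "\<dots> = (\<Sum>i<n. T $$ (i, i) ^ k)"
    unfolding mat_trace_def using upper_triangular_pow_mat[OF T ut, of k] T by simp
  also have "\<dots> = (\<Sum>r\<leftarrow>rs. r ^ k)"
    unfolding diag[symmetric] diag_mat_def using T
    by (simp add: sum_list_distinct_conv_sum_set atLeast0LessThan)
  finally show ?thesis .
qed

section \<open>Eigenvalues\<close>

lemma conjugate_of_real_mult_mat_vec:
  fixes B :: "real mat" and w :: "complex vec"
  assumes "B \<in> carrier_mat n n" "w \<in> carrier_vec n"
  shows "conjugate (map_mat complex_of_real B *\<^sub>v w) = map_mat complex_of_real B *\<^sub>v conjugate w"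
proof (rule eq_vecI)
  fix i assume "i < dim_vec (map_mat complex_of_real B *\<^sub>v conjugate w)"
  then have i: "i < n" using assms by simp
  have "conjugate (row (map_mat complex_of_real B) i) = row (map_mat complex_of_real B) i"
    using assms i by (intro eq_vecI) (auto simp: conjugate_complex_def)
  then show "conjugate (map_mat complex_of_real B *\<^sub>v w) $ i
      = (map_mat complex_of_real B *\<^sub>v conjugate w) $ i"
    using assms i conjugate_sprod_vec[of "row (map_mat complex_of_real B) i" n w] by simp
qed simp

lemma real_symmetric_eigenvalue_real:
  fixes B :: "real mat"
  assumes B: "B \<in> carrier_mat n n" and sym: "B\<^sup>T = B"
    and ev: "eigenvalue (map_mat complex_of_real B) a"
  shows "a \<in> \<real>"
proof -
  let ?A = "map_mat complex_of_real B"
  obtain v where v: "v \<in> carrier_vec n" "v \<noteq> 0\<^sub>v n" and Av: "?A *\<^sub>v v = a \<cdot>\<^sub>v v"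
    using ev B unfolding eigenvalue_def eigenvector_def by auto
  have A: "?A \<in> carrier_mat n n" using B by simp
  have "?A\<^sup>T = map_mat complex_of_real (B\<^sup>T)" using B by auto
  then have symA: "?A\<^sup>T = ?A" using sym by simp
  define c where "c = conjugate v \<bullet> v"
  have "c > 0"
    unfolding c_def using v by (simp add: comm_scalar_prod[of _ n])
  then have c: "c \<noteq> 0" "conjugate c = c"
    by (auto simp: less_complex_def complex_eq_iff)
  have "conjugate (conjugate v \<bullet> (?A *\<^sub>v v)) = conjugate (conjugate v) \<bullet> conjugate (?A *\<^sub>v v)"
    using v A by (intro conjugate_sprod_vec[of _ n]) auto
  also have "\<dots> = v \<bullet> (?A *\<^sub>v conjugate v)"
    using v by (simp add: conjugate_of_real_mult_mat_vec[OF B])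
  also have "\<dots> = (?A *\<^sub>v v) \<bullet> conjugate v"
    using transpose_vec_mult_scalar[OF A, of "conjugate v" v] v symA by simp
  finally have "conjugate (a * c) = a * c"
    using v Av unfolding c_def by (simp add: comm_scalar_prod[of _ n])
  then have "cnj a = a" using c by simp
  then show ?thesis using Reals_cnj_iff by blast
qed

lemma real_symmetric_char_poly_splits:
  fixes B :: "real mat"
  assumes B: "B \<in> carrier_mat n n" and sym: "B\<^sup>T = B"
  obtains rs where "char_poly B = (\<Prod>r\<leftarrow>rs. [:-r, 1:])" "length rs = n"
proof -
  let ?A = "map_mat complex_of_real B"
  have A: "?A \<in> carrier_mat n n" using B by simp
  obtain as where cp: "char_poly ?A = (\<Prod>a\<leftarrow>as. [:-a, 1:])" and len: "length as = n"
    using char_poly_factorized[OF A] by blast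
  have "a \<in> \<real>" if "a \<in> set as" for a
    using real_symmetric_eigenvalue_real[OF B sym] eigenvalue_root_char_poly[OF A] cp
      linear_poly_root[OF that] by simp
  then have as: "as = map complex_of_real (map Re as)"
    by (simp add: map_idI Reals_def)
  interpret of_real_poly: map_poly_inj_idom_hom complex_of_real ..
  have "map_poly complex_of_real (char_poly B)
      = map_poly complex_of_real (\<Prod>r\<leftarrow>map Re as. [:-r, 1:])"
    unfolding of_real_hom.char_poly_hom[OF B, symmetric] cp
    by (subst as) (simp add: of_real_poly.hom_prod_list o_def)
  then have "char_poly B = (\<Prod>r\<leftarrow>map Re as. [:-r, 1:])"
    by (rule of_real_poly.injectivity)
  with len show ?thesis by (intro that[of "map Re as"]) simp_all
qed

lemma order_prod_linear_factors:
  fixes rs :: "'a::idom list"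
  shows "Polynomial.order a (\<Prod>r\<leftarrow>rs. [:-r, 1:]) = count_list rs a"
proof (induction rs)
  case (Cons r rs)
  have "(\<Prod>r\<leftarrow>rs. [:-r, 1:]) \<noteq> 0"
    by (auto simp: prod_list_zero_iff)
  then have "[:-r, 1:] * (\<Prod>r\<leftarrow>rs. [:-r, 1:]) \<noteq> 0"
    by (metis mult_eq_0_iff pCons_eq_0_iff one_neq_zero)
  then have "Polynomial.order a (\<Prod>r\<leftarrow>r # rs. [:-r, 1:])
      = Polynomial.order a [:-r, 1:] + Polynomial.order a (\<Prod>r\<leftarrow>rs. [:-r, 1:])"
    by (simp only: prod_list.Cons list.map) (rule order_mult)
  then show ?case using Cons by (simp add: order_linear')
qed simp

lemma sum_list_map_eq_sum_of_nat_count: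
  fixes f :: "'a \<Rightarrow> 'b::semiring_1"
  shows "sum_list (map f xs) = (\<Sum>x\<in>set xs. of_nat (count_list xs x) * f x)"
proof (induction xs)
  case (Cons y xs)
  have "(\<Sum>x\<in>set (y # xs). of_nat (count_list (y # xs) x) * f x)
      = (\<Sum>x\<in>insert y (set xs). of_nat (count_list xs x) * f x + (if x = y then f x else 0))"
    by (intro sum.cong) (auto simp: distrib_right add.commute)
  also have "\<dots> = (\<Sum>x\<in>insert y (set xs). of_nat (count_list xs x) * f x) + f y"
    by (simp add: sum.distrib)
  also have "(\<Sum>x\<in>insert y (set xs). of_nat (count_list xs x) * f x)
      = (\<Sum>x\<in>set xs. of_nat (count_list xs x) * f x)"
    by (cases "y \<in> set xs") (simp_all add: insert_absorb)
  finally show ?case using Cons by (simp add: add.commute)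
qed simp

lemma eigenvalues_eq_set_roots:
  fixes A :: "'a::field mat"
  assumes A: "A \<in> carrier_mat n n" and cp: "char_poly A = (\<Prod>r\<leftarrow>rs. [:-r, 1:])"
  shows "{a. eigenvalue A a} = set rs"
  using eigenvalue_root_char_poly[OF A] by (auto simp: cp poly_prod_list_zero_iff)

lemma eig_power_sum_eq_sum_roots:
  assumes A: "A \<in> carrier_mat n n" and cp: "char_poly A = (\<Prod>r\<leftarrow>rs. [:-r, 1:])"
  shows "eig_power_sum A k = (\<Sum>r\<leftarrow>rs. r ^ k)"
  unfolding eig_power_sum_def eigenvalues_eq_set_roots[OF A cp] cp order_prod_linear_factors
  by (rule sum_list_map_eq_sum_of_nat_count[symmetric])

section \<open>Nonnegative matrices\<close>

definition nonneg_mat :: "'a::{zero, ord} mat \<Rightarrow> bool" where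
  "nonneg_mat A \<longleftrightarrow> (\<forall>i<dim_row A. \<forall>j<dim_col A. 0 \<le> A $$ (i, j))"

lemma nonneg_matD: "nonneg_mat A \<Longrightarrow> i < dim_row A \<Longrightarrow> j < dim_col A \<Longrightarrow> 0 \<le> A $$ (i, j)"
  unfolding nonneg_mat_def by blast

lemma nonneg_mat_mult:
  fixes A B :: "'a::linordered_semidom mat"
  assumes "A \<in> carrier_mat n m" "B \<in> carrier_mat m p" "nonneg_mat A" "nonneg_mat B"
  shows "nonneg_mat (A * B)"
  unfolding nonneg_mat_def using assms
  by (auto simp: index_mult_mat_sum[OF assms(1,2)] simp del: index_mult_mat(1)
      intro!: sum_nonneg mult_nonneg_nonneg nonneg_matD)

lemma nonneg_mat_pow_mat:
  fixes A :: "'a::linordered_semidom mat"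
  assumes A: "A \<in> carrier_mat n n" and nonneg: "nonneg_mat A"
  shows "nonneg_mat (A ^\<^sub>m k)"
proof (induction k)
  case 0
  show ?case using A by (auto simp: nonneg_mat_def)
next
  case (Suc k)
  then show ?case using nonneg_mat_mult[OF pow_carrier_mat[OF A] A] nonneg by simp
qed

lemma diag_le_mat_trace:
  fixes A :: "'a::linordered_semidom mat"
  assumes "A \<in> carrier_mat n n" "nonneg_mat A" "i < n"
  shows "A $$ (i, i) \<le> mat_trace A"
  unfolding mat_trace_def using assms
  by (intro member_le_sum[where f = "\<lambda>j. A $$ (j, j)"]) (auto intro: nonneg_matD)

lemma mat_trace_nonneg:
  fixes A :: "'a::linordered_semidom mat"
  assumes "A \<in> carrier_mat n n" "nonneg_mat A"
  shows "0 \<le> mat_trace A"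
  unfolding mat_trace_def using assms by (intro sum_nonneg) (auto intro: nonneg_matD)

lemma diag_mult_le_index_mult_mat:
  fixes X Y :: "'a::linordered_semidom mat"
  assumes X: "X \<in> carrier_mat n n" and Y: "Y \<in> carrier_mat n n"
    and "nonneg_mat X" "nonneg_mat Y" and i: "i < n"
  shows "X $$ (i, i) * Y $$ (i, i) \<le> (X * Y) $$ (i, i)"
  unfolding index_mult_mat_sum[OF X Y i i] using assms
  by (intro member_le_sum[where f = "\<lambda>k. X $$ (i, k) * Y $$ (k, i)"])
     (auto intro: mult_nonneg_nonneg nonneg_matD)

lemma diag_pow_mat_power_le:
  fixes A :: "'a::linordered_semidom mat"
  assumes A: "A \<in> carrier_mat n n" and nonneg: "nonneg_mat A" and i: "i < n"
  shows "(A ^\<^sub>m p) $$ (i, i) ^ k \<le> (A ^\<^sub>m (p * k)) $$ (i, i)"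
proof (induction k)
  case 0
  show ?case using A i by simp
next
  case (Suc k)
  have "(A ^\<^sub>m p) $$ (i, i) ^ Suc k \<le> (A ^\<^sub>m (p * k)) $$ (i, i) * (A ^\<^sub>m p) $$ (i, i)"
    using Suc nonneg_matD[OF nonneg_mat_pow_mat[OF A nonneg]] A i
    by (simp add: mult_right_mono power_Suc2 del: power_Suc)
  also have "\<dots> \<le> (A ^\<^sub>m (p * k) * A ^\<^sub>m p) $$ (i, i)"
    using A nonneg i by (intro diag_mult_le_index_mult_mat nonneg_mat_pow_mat) auto
  also have "A ^\<^sub>m (p * k) * A ^\<^sub>m p = A ^\<^sub>m (p * Suc k)"
    using pow_mat_add[OF A, of "p * k" p] by (simp add: add.commute)
  finally show ?case .
qed

lemma even_power_mult_add_le: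
  fixes r L :: real
  assumes "r \<le> L" "0 < L"
  shows "r ^ (2 * m) * (L + r) \<le> 2 * L ^ (2 * m + 1)"
proof (cases "L + r \<le> 0")
  case True
  then have "r ^ (2 * m) * (L + r) \<le> 0"
    by (simp add: mult_nonneg_nonpos zero_le_even_power)
  also have "0 \<le> 2 * L ^ (2 * m + 1)" using assms by simp
  finally show ?thesis .
next
  case False
  then have "\<bar>r\<bar> \<le> L" using assms by auto
  then have "r ^ (2 * m) \<le> L ^ (2 * m)"
    using power_mono[of "\<bar>r\<bar>" L "2 * m"] by (simp add: power_even_abs)
  then have "r ^ (2 * m) * (L + r) \<le> L ^ (2 * m) * (2 * L)"
    using False assms by (intro mult_mono) (auto simp: zero_le_even_power)
  then show ?thesis by (simp add: mult_ac)
qed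

lemma mat_trace_even_pow_le:
  fixes A :: "real mat" and L :: real
  assumes A: "A \<in> carrier_mat n n" and nonneg: "nonneg_mat A"
    and cp: "char_poly A = (\<Prod>r\<leftarrow>rs. [:-r, 1:])"
    and bound: "\<And>r. r \<in> set rs \<Longrightarrow> r \<le> L" and L: "0 < L"
  shows "mat_trace (A ^\<^sub>m (2 * m)) \<le> 2 * length rs * L ^ (2 * m)"
proof -
  have "0 \<le> mat_trace (A ^\<^sub>m (2 * m + 1))"
    by (rule mat_trace_nonneg[OF pow_carrier_mat[OF A] nonneg_mat_pow_mat[OF A nonneg]])
  then have "L * mat_trace (A ^\<^sub>m (2 * m))
      \<le> L * mat_trace (A ^\<^sub>m (2 * m)) + mat_trace (A ^\<^sub>m (2 * m + 1))"
    by linarith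
  also have "\<dots> = (\<Sum>r\<leftarrow>rs. r ^ (2 * m) * (L + r))"
    unfolding mat_trace_pow_mat_eq_sum_roots[OF A cp]
    by (simp add: sum_list_const_mult sum_list_addf algebra_simps)
  also have "\<dots> \<le> (\<Sum>r\<leftarrow>rs. 2 * L ^ (2 * m + 1))"
    by (intro sum_list_mono even_power_mult_add_le bound L)
  also have "\<dots> = L * (2 * length rs * L ^ (2 * m))"
    by (simp add: sum_list_triv)
  finally show ?thesis using L by simp
qed

lemma power_le_const_mult_power_imp_le:
  fixes x y C :: real
  assumes y: "0 < y" and bound: "\<And>k. x ^ k \<le> C * y ^ k"
  shows "x \<le> y"
proof (rule ccontr)
  assume "\<not> x \<le> y"
  then have "1 < x / y" using y by simp
  then obtain k where "C < (x / y) ^ k" using real_arch_pow by blast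
  then have "C * y ^ k < x ^ k" using y by (simp add: power_divide pos_less_divide_eq)
  with bound[of k] show False by simp
qed

lemma nonneg_mat_nonpos_roots_eq_0:
  fixes A :: "real mat"
  assumes A: "A \<in> carrier_mat n n" and nonneg: "nonneg_mat A"
    and cp: "char_poly A = (\<Prod>r\<leftarrow>rs. [:-r, 1:])"
    and nonpos: "\<And>r. r \<in> set rs \<Longrightarrow> r \<le> 0" and r: "r \<in> set rs"
  shows "r = 0"
proof -
  have "0 \<le> mat_trace (A ^\<^sub>m 1)"
    by (rule mat_trace_nonneg[OF pow_carrier_mat[OF A] nonneg_mat_pow_mat[OF A nonneg]])
  then have "0 \<le> sum_list rs"
    unfolding mat_trace_pow_mat_eq_sum_roots[OF A cp] by simp
  moreover have "sum_list (map uminus rs) = - sum_list rs"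
    by (induction rs) simp_all
  ultimately have "sum_list (map uminus rs) = 0"
    using sum_list_nonpos[of rs] nonpos by simp
  then show ?thesis using sum_list_nonneg_eq_0_iff[of "map uminus rs"] nonpos r by fastforce
qed

lemma diag_even_pow_le_root_bound:
  fixes A :: "real mat" and L :: real
  assumes A: "A \<in> carrier_mat n n" and nonneg: "nonneg_mat A"
    and cp: "char_poly A = (\<Prod>r\<leftarrow>rs. [:-r, 1:])"
    and bound: "\<And>r. r \<in> set rs \<Longrightarrow> r \<le> L" and L: "0 < L" and i: "i < n"
  shows "(A ^\<^sub>m (2 * s)) $$ (i, i) \<le> L ^ (2 * s)"
proof (rule power_le_const_mult_power_imp_le)
  fix k
  have "(A ^\<^sub>m (2 * s)) $$ (i, i) ^ k \<le> (A ^\<^sub>m (2 * (s * k))) $$ (i, i)"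
    using diag_pow_mat_power_le[OF A nonneg i, of "2 * s" k] by (simp add: mult.assoc)
  also have "\<dots> \<le> mat_trace (A ^\<^sub>m (2 * (s * k)))"
    using A nonneg i by (intro diag_le_mat_trace nonneg_mat_pow_mat) auto
  also have "\<dots> \<le> 2 * length rs * L ^ (2 * (s * k))"
    by (rule mat_trace_even_pow_le[OF A nonneg cp bound L])
  finally show "(A ^\<^sub>m (2 * s)) $$ (i, i) ^ k \<le> 2 * length rs * (L ^ (2 * s)) ^ k"
    by (simp add: power_mult mult.assoc)
qed (use L in simp)

lemma diag_even_pow_le_lambda1:
  fixes A :: "real mat"
  assumes A: "A \<in> carrier_mat n n" and sym: "A\<^sup>T = A" and nonneg: "nonneg_mat A"
    and i: "i < n"
  shows "(A ^\<^sub>m (2 * s)) $$ (i, i) \<le> lambda1 A ^ (2 * s)"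
proof -
  obtain rs where cp: "char_poly A = (\<Prod>r\<leftarrow>rs. [:-r, 1:])" and len: "length rs = n"
    using real_symmetric_char_poly_splits[OF A sym] .
  define L where "L = lambda1 A"
  have "rs \<noteq> []" using len i by auto
  then have L_root: "L \<in> set rs" and L_max: "\<And>r. r \<in> set rs \<Longrightarrow> r \<le> L"
    unfolding L_def lambda1_def eigenvalues_eq_set_roots[OF A cp] by auto
  show ?thesis
  proof (cases "0 < L")
    case True
    show ?thesis
      using diag_even_pow_le_root_bound[OF A nonneg cp L_max True i] unfolding L_def .
  next
    case False
    then have "r \<le> 0" if "r \<in> set rs" for r
      using L_max[OF that] by linarith
    then have roots: "r = 0" if "r \<in> set rs" for r
      using nonneg_mat_nonpos_roots_eq_0[OF A nonneg cp _ that] by blast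
    show ?thesis
    proof (cases "s = 0")
      case False
      have "(A ^\<^sub>m (2 * s)) $$ (i, i) \<le> (\<Sum>r\<leftarrow>rs. r ^ (2 * s))"
        using A nonneg i mat_trace_pow_mat_eq_sum_roots[OF A cp]
        by (metis diag_le_mat_trace nonneg_mat_pow_mat pow_carrier_mat)
      also have "\<dots> = 0"
        using roots False by (subst map_cong[OF refl, of _ _ "\<lambda>_. 0"]) (auto simp: sum_list_triv)
      also have "0 = L ^ (2 * s)"
        using roots[OF L_root] False by simp
      finally show ?thesis unfolding L_def .
    qed (use A i in simp)
  qed
qed

section \<open>Closed walks\<close>

lemma sum_set_distinct_eq_sum_nth:
  assumes "distinct xs"
  shows "(\<Sum>x\<in>set xs. f x) = (\<Sum>k<length xs. f (xs ! k))"
  using assms by (simp add: sum.distinct_set_conv_list sum_list_sum_nth atLeast0LessThan)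

lemma vertex_list:
  assumes "finite V"
  shows "distinct (vertex_list V)" "set (vertex_list V) = V"
proof -
  have "\<exists>xs. distinct xs \<and> set xs = V" using finite_distinct_list[OF assms] by blast
  from someI_ex[OF this] show "distinct (vertex_list V)" "set (vertex_list V) = V"
    unfolding vertex_list_def by auto
qed

lemma adj_mat_carrier: "adj_mat E V \<in> carrier_mat (length (vertex_list V)) (length (vertex_list V))"
  unfolding adj_mat_def Let_def by simp

lemma index_adj_mat:
  "i < length (vertex_list V) \<Longrightarrow> j < length (vertex_list V) \<Longrightarrow>
   adj_mat E V $$ (i, j) = (if E (vertex_list V ! i) (vertex_list V ! j) then 1 else 0)"
  unfolding adj_mat_def Let_def by simp

lemma transpose_adj_mat:
  assumes "\<And>u v. E u v \<Longrightarrow> E v u"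
  shows "(adj_mat E V)\<^sup>T = adj_mat E V"
  using adj_mat_carrier[of E V] assms by (intro eq_matI) (auto simp: index_adj_mat)

lemma nonneg_mat_adj_mat: "nonneg_mat (adj_mat E V)"
  using adj_mat_carrier[of E V] by (auto simp: nonneg_mat_def index_adj_mat)

text \<open>Counts walks u = x0, ..., xm = w with x1, ..., xm \<in> V; the start vertex u need not lie in V.\<close>

fun walk_count :: "('a \<Rightarrow> 'a \<Rightarrow> bool) \<Rightarrow> 'a set \<Rightarrow> nat \<Rightarrow> 'a \<Rightarrow> 'a \<Rightarrow> real" where
  "walk_count E V 0 u w = (if u = w then 1 else 0)"
| "walk_count E V (Suc m) u w = (\<Sum>x\<in>V. walk_count E V m u x * (if E x w then 1 else 0))"

lemma index_adj_mat_pow: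
  assumes V: "finite V" and i: "i < length (vertex_list V)" and j: "j < length (vertex_list V)"
  shows "(adj_mat E V ^\<^sub>m m) $$ (i, j) = walk_count E V m (vertex_list V ! i) (vertex_list V ! j)"
  using j
proof (induction m arbitrary: j)
  case 0
  then show ?case
    using i adj_mat_carrier[of E V] nth_eq_iff_index_eq[OF vertex_list(1)[OF V] i] by simp
next
  case (Suc m)
  let ?vs = "vertex_list V"
  have "(adj_mat E V ^\<^sub>m Suc m) $$ (i, j)
      = (\<Sum>k<length ?vs. (adj_mat E V ^\<^sub>m m) $$ (i, k) * adj_mat E V $$ (k, j))"
    using index_mult_mat_sum[OF pow_carrier_mat[OF adj_mat_carrier] adj_mat_carrier i Suc.prems]
    by simp
  also have "\<dots> = (\<Sum>k<length ?vs. walk_count E V m (?vs ! i) (?vs ! k)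
                      * (if E (?vs ! k) (?vs ! j) then 1 else 0))"
    using Suc by (intro sum.cong) (auto simp: index_adj_mat)
  also have "\<dots> = walk_count E V (Suc m) (?vs ! i) (?vs ! j)"
    using sum_set_distinct_eq_sum_nth[OF vertex_list(1)[OF V],
        of "\<lambda>x. walk_count E V m (?vs ! i) x * (if E x (?vs ! j) then 1 else 0)"]
    by (simp add: vertex_list(2)[OF V])
  finally show ?case .
qed

lemma mat_trace_adj_mat_pow:
  assumes V: "finite V"
  shows "mat_trace (adj_mat E V ^\<^sub>m k) = (\<Sum>u\<in>V. walk_count E V k u u)"
proof -
  let ?vs = "vertex_list V"
  have "mat_trace (adj_mat E V ^\<^sub>m k) = (\<Sum>i<length ?vs. walk_count E V k (?vs ! i) (?vs ! i))"
    unfolding mat_trace_def using adj_mat_carrier[of E V] by (simp add: index_adj_mat_pow[OF V])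
  also have "\<dots> = (\<Sum>u\<in>V. walk_count E V k u u)"
    using sum_set_distinct_eq_sum_nth[OF vertex_list(1)[OF V], of "\<lambda>u. walk_count E V k u u"]
    by (simp add: vertex_list(2)[OF V])
  finally show ?thesis .
qed

lemma eig_power_sum_adj_mat:
  assumes "finite V" and "\<And>u v. E u v \<Longrightarrow> E v u"
  shows "eig_power_sum (adj_mat E V) k = (\<Sum>u\<in>V. walk_count E V k u u)"
proof -
  obtain rs where cp: "char_poly (adj_mat E V) = (\<Prod>r\<leftarrow>rs. [:-r, 1:])"
    using real_symmetric_char_poly_splits[OF adj_mat_carrier transpose_adj_mat] assms(2) by metis
  show ?thesis
    using eig_power_sum_eq_sum_roots[OF adj_mat_carrier cp]
      mat_trace_pow_mat_eq_sum_roots[OF adj_mat_carrier cp] mat_trace_adj_mat_pow[OF assms(1)]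
    by simp
qed

lemma closed_walk_count_le_lambda1:
  assumes U: "finite U" and sym: "\<And>u v. E u v \<Longrightarrow> E v u" and u: "u \<in> U"
  shows "walk_count E U (2 * s) u u \<le> lambda1 (adj_mat E U) ^ (2 * s)"
proof -
  obtain i where i: "i < length (vertex_list U)" and "vertex_list U ! i = u"
    using u vertex_list(2)[OF U] by (metis in_set_conv_nth)
  then have "walk_count E U (2 * s) u u = (adj_mat E U ^\<^sub>m (2 * s)) $$ (i, i)"
    using index_adj_mat_pow[OF U i i] by simp
  also have "\<dots> \<le> lambda1 (adj_mat E U) ^ (2 * s)"
    using adj_mat_carrier transpose_adj_mat[OF sym] nonneg_mat_adj_mat i
    by (rule diag_even_pow_le_lambda1)
  finally show ?thesis .
qed

lemma ball_verts_mono: "a \<le> b \<Longrightarrow> ball_verts E V v a \<subseteq> ball_verts E V v b"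
  by (rule lift_Suc_mono_le[of "ball_verts E V v"]) auto

lemma center_in_ball_verts: "v \<in> ball_verts E V v k"
  using ball_verts_mono[of 0 k E V v] by auto

lemma ball_verts_subset: "v \<in> V \<Longrightarrow> ball_verts E V v k \<subseteq> V"
  by (induction k) auto

lemma walk_count_nonzero_imp_in_ball_verts:
  "x \<in> V \<Longrightarrow> walk_count E V m v x \<noteq> 0 \<Longrightarrow> x \<in> ball_verts E V v m"
proof (induction m arbitrary: x)
  case (Suc m)
  then obtain y where "y \<in> V" "walk_count E V m v y \<noteq> 0" "E y x"
    by (auto elim: sum.not_neutral_contains_not_neutral split: if_splits)
  with Suc show ?case by auto
qed (simp split: if_splits)

lemma walk_count_ball_verts:
  assumes sym: "\<And>u v. E u v \<Longrightarrow> E v u" and V: "finite V" and v: "v \<in> V"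
  shows "w \<in> ball_verts E V v b \<Longrightarrow> m + b \<le> 2 * s \<Longrightarrow>
    walk_count E V m v w = walk_count E (ball_verts E V v s) m v w"
proof (induction m arbitrary: w b)
  case (Suc m)
  let ?S = "ball_verts E V v s"
  let ?f = "\<lambda>U x. walk_count E U m v x * (if E x w then 1 else 0)"
  have pred_in_ball: "x \<in> ball_verts E V v (Suc b)" if "x \<in> V" "E x w" for x
    using Suc.prems(1) that sym by auto
  \<comment> \<open>A neighbour x of w outside B(v, s) forces b \<ge> s, hence m < s, so no walk of length m
    from v reaches x.\<close>
  have "?f V x = 0" if x: "x \<in> V - ?S" for x
  proof (cases "E x w")
    case True
    then have "x \<in> ball_verts E V v (Suc b)" using x pred_in_ball by blast
    then have "\<not> Suc b \<le> s" using x ball_verts_mono[of "Suc b" s E V v] by blast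
    then have "ball_verts E V v m \<subseteq> ?S" using Suc.prems(2) by (intro ball_verts_mono) simp
    then show ?thesis using x walk_count_nonzero_imp_in_ball_verts[of x V E m v] by auto
  qed simp
  then have "walk_count E V (Suc m) v w = (\<Sum>x\<in>?S. ?f V x)"
    using V ball_verts_subset[OF v] by (simp add: sum.mono_neutral_right)
  also have "\<dots> = (\<Sum>x\<in>?S. ?f ?S x)"
  proof (rule sum.cong)
    fix x assume x: "x \<in> ?S"
    show "?f V x = ?f ?S x"
    proof (cases "E x w")
      case True
      then have "x \<in> ball_verts E V v (Suc b)" using x ball_verts_subset[OF v] pred_in_ball by blast
      from Suc.IH[OF this] Suc.prems(2) show ?thesis by simp
    qed simp
  qed simp
  finally show ?case by simp
qed simp

theorem lemma7:
  fixes V :: "'a set" and E :: "'a \<Rightarrow> 'a \<Rightarrow> bool" and s :: nat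
  assumes "finite V"
    and "\<And>u v. E u v \<Longrightarrow> E v u"
    and "\<And>v. \<not> E v v"
    and "s > 0"
  shows "eig_power_sum (adj_mat E V) (2 * s)
           \<le> (\<Sum>v\<in>V. lambda1 (adj_mat E (ball_verts E V v s)) ^ (2 * s))"
proof -
  note V = assms(1) and sym = assms(2)
  have "eig_power_sum (adj_mat E V) (2 * s) = (\<Sum>v\<in>V. walk_count E V (2 * s) v v)"
    by (rule eig_power_sum_adj_mat[OF V sym])
  also have "\<dots> = (\<Sum>v\<in>V. walk_count E (ball_verts E V v s) (2 * s) v v)"
    using walk_count_ball_verts[OF sym V, where b = 0] center_in_ball_verts by (intro sum.cong) auto
  also have "\<dots> \<le> (\<Sum>v\<in>V. lambda1 (adj_mat E (ball_verts E V v s)) ^ (2 * s))"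
  proof (rule sum_mono)
    fix v assume "v \<in> V"
    then have "finite (ball_verts E V v s)" using finite_subset[OF ball_verts_subset V] by blast
    then show "walk_count E (ball_verts E V v s) (2 * s) v v
        \<le> lambda1 (adj_mat E (ball_verts E V v s)) ^ (2 * s)"
      by (rule closed_walk_count_le_lambda1[of _ E v s, OF _ sym center_in_ball_verts])
  qed
  finally show ?thesis .
qed

end
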